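(* Let $\alpha=\{a_k\}_{k\ge1}$ be a sequence of positive numbers with $a_k\to\infty$ and $x_\alpha=1$, and let $j\ge2$. If there is $N_0$ such that $$\int_0^1 L(x;\alpha;j)\,F_{N_0}(x;\alpha)\,|\ln x|^{j-1}\frac{dx}{x}<\infty,$$ then $\lim_{N\to\infty}E[U_j^N]=I(\alpha;j)<\infty$.
   Context: For $N\ge2$, coupon type $k\in\{1,\dots,N\}$ has probability $a_k/\sum_{i=1}^Na_i$; $U_j^N$ is the number of empty album places of the $j$-th collector when the first collector completes her set (each collector passes duplicates to the next one), with $$E[U_j^N]=\sum_{k=1}^N\int_0^\infty a_k e^{-a_k t}\frac{(a_kt)^{j-1}}{(j-1)!}\prod_{i\ne k,\,1\le i\le N}\big(1-e^{-a_i t}\big)\,dt.$$ $x_\alpha:=\inf\{x\in[0,1]:\sum_{k}x^{a_k}=\infty\}$. For $x\in(0,x_\alpha)$: $L(x;\alpha;j):=\sum_{k=1}^\infty a_k^j\frac{x^{a_k}}{1-x^{a_k}}$, $F(x;\alpha):=\prod_{k=1}^\infty(1-x^{a_k})$; $F_{N}(x;\alpha):=\prod_{k=1}^{N}(1-x^{a_k})$; and $I(\alpha;j):=\frac{1}{(j-1)!}\int_0^{x_\alpha}L(x;\alpha;j)F(x;\alpha)|\ln x|^{j-1}\frac{dx}{x}$. *)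

theory Defs
  imports "HOL-Analysis.Analysis"
begin

(* The sequence alpha = (a_k)_{k>=1} is a function a :: nat => real; a 0 is ignored. *)

definition x_alpha :: "(nat \<Rightarrow> real) \<Rightarrow> real" where
  "x_alpha a = Inf {x \<in> {0..1}. \<not> summable (\<lambda>k. x powr a (Suc k))}"

definition L_fun :: "(nat \<Rightarrow> real) \<Rightarrow> nat \<Rightarrow> real \<Rightarrow> real" where
  "L_fun a j x = (\<Sum>k. a (Suc k) ^ j * x powr a (Suc k) / (1 - x powr a (Suc k)))"

definition F_fun :: "(nat \<Rightarrow> real) \<Rightarrow> real \<Rightarrow> real" where
  "F_fun a x = (\<Prod>k. 1 - x powr a (Suc k))"

definition F_N :: "(nat \<Rightarrow> real) \<Rightarrow> nat \<Rightarrow> real \<Rightarrow> real" where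
  "F_N a N x = (\<Prod>k\<in>{1..N}. 1 - x powr a k)"

definition I_fun :: "(nat \<Rightarrow> real) \<Rightarrow> nat \<Rightarrow> ennreal" where
  "I_fun a j = (\<integral>\<^sup>+ x \<in> {0<..<x_alpha a}.
      ennreal (L_fun a j x * F_fun a x * \<bar>ln x\<bar> ^ (j - 1) / x / fact (j - 1)) \<partial>lborel)"

definition EU :: "(nat \<Rightarrow> real) \<Rightarrow> nat \<Rightarrow> nat \<Rightarrow> ennreal" where
  "EU a j N = (\<Sum>k\<in>{1..N}. \<integral>\<^sup>+ t \<in> {0..}.
      ennreal (a k * exp (- a k * t) * (a k * t) ^ (j - 1) / fact (j - 1)
               * (\<Prod>i\<in>{1..N} - {k}. 1 - exp (- a i * t))) \<partial>lborel)"

end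

(* The substitution x = exp (-t) turns E[U_j^N] into the integral over (0,1) of
   L_N(x) F_N(x) |ln x|^(j-1) / x / (j-1)!, where L_N is the N-th partial sum of L(x;alpha;j).
   Since x_alpha = 1, for every x in (0,1) the series L and the product F converge, so the
   integrands converge pointwise to the integrand of I(alpha;j). For N >= N0 they are bounded by
   L F_N0 |ln x|^(j-1) / x, because L_N increases to L and F_N decreases in N; the hypothesis makes
   this bound integrable, and dominated convergence gives both the limit and its finiteness. *)

theory Submission
  imports Defs "HOL-Real_Asymp.Real_Asymp"
begin

lemma nn_integral_indicator_incseq_LIMSEQ:
  fixes f :: "'a \<Rightarrow> ennreal"
  assumes inc: "incseq A" and [measurable]: "\<And>i. A i \<in> sets M" "f \<in> borel_measurable M"
  shows "(\<lambda>i. \<integral>\<^sup>+x. f x * indicator (A i) x \<partial>M) \<longlonglongrightarrow> (\<integral>\<^sup>+x. f x * indicator (\<Union>i. A i) x \<partial>M)"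
proof (rule nn_integral_LIMSEQ)
  show "incseq (\<lambda>i x. f x * indicator (A i) x)"
    using inc by (auto simp: incseq_def le_fun_def intro!: mult_left_mono split: split_indicator)
  show "(\<lambda>i. f x * indicator (A i) x) \<longlonglongrightarrow> f x * indicator (\<Union>i. A i) x" for x
  proof (cases "x \<in> (\<Union>i. A i)")
    case True
    then obtain i0 where "x \<in> A i0" by blast
    then have "eventually (\<lambda>i. x \<in> A i) sequentially"
      using inc unfolding eventually_sequentially incseq_def by blast
    then have "eventually (\<lambda>i. f x * indicator (A i) x = f x * indicator (\<Union>i. A i) x) sequentially"
      by eventually_elim (use True in simp)
    then show ?thesis by (rule tendsto_eventually)
  qed auto
qed auto

lemma nn_integral_exp_substitution_Icc:
  fixes h :: "real \<Rightarrow> real"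
  assumes [measurable]: "h \<in> borel_measurable borel" and "0 \<le> T"
  shows "(\<integral>\<^sup>+x. ennreal (h x / x) * indicator {exp (- T)..1} x \<partial>lborel)
    = (\<integral>\<^sup>+t. ennreal (h (exp (- t))) * indicator {0..T} t \<partial>lborel)"
proof -
  have "(\<integral>\<^sup>+x. ennreal (h x / x) * indicator {exp (- T)..1} x \<partial>lborel)
      = (\<integral>\<^sup>+x. ennreal (h x / x * indicator {exp (- T)..exp 0} x) \<partial>lborel)"
    by (simp add: nn_integral_set_ennreal)
  also have "\<dots> = (\<integral>\<^sup>+y. ennreal (h (exp y) / exp y * exp y * indicator {- T..0} y) \<partial>lborel)"
    using \<open>0 \<le> T\<close> by (intro nn_integral_substitution[where g=exp and g'=exp])
      (auto intro!: continuous_intros derivative_eq_intros simp: set_borel_measurable_def)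
  also have "\<dots> = (\<integral>\<^sup>+y. ennreal (h (exp y)) * indicator {- T..0} y \<partial>lborel)"
    by (simp add: nn_integral_set_ennreal)
  also have "\<dots> = (\<integral>\<^sup>+t. ennreal (h (exp (- t))) * indicator {- T..0} (- t) \<partial>lborel)"
    using nn_integral_real_affine[of "\<lambda>y. ennreal (h (exp y)) * indicator {- T..0} y" "-1" 0] by simp
  also have "\<dots> = (\<integral>\<^sup>+t. ennreal (h (exp (- t))) * indicator {0..T} t \<partial>lborel)"
    by (intro nn_integral_cong) (auto split: split_indicator)
  finally show ?thesis .
qed

lemma nn_integral_exp_substitution:
  fixes h :: "real \<Rightarrow> real"
  assumes [measurable]: "h \<in> borel_measurable borel"
  shows "(\<integral>\<^sup>+t\<in>{0..}. ennreal (h (exp (- t))) \<partial>lborel)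
    = (\<integral>\<^sup>+x\<in>{0<..<1}. ennreal (h x / x) \<partial>lborel)"
proof -
  have Ioc: "(\<Union>n. {exp (- real n)..1}) = {0<..1::real}"
  proof (intro equalityI subsetI)
    fix x :: real assume x: "x \<in> {0<..1}"
    obtain n :: nat where "- ln x < n" using reals_Archimedean2 by blast
    then have "exp (- real n) < exp (ln x)" by (intro exp_less_mono) linarith
    with x show "x \<in> (\<Union>n. {exp (- real n)..1})" by (intro UN_I[of n]) auto
  qed (auto intro: less_le_trans[OF exp_gt_zero])
  have Ici: "(\<Union>n. {0..real n}) = {0::real..}"
    using real_arch_simple by fastforce
  have inc_Icc: "incseq (\<lambda>n. {exp (- real n)..1::real})" and inc_Ici: "incseq (\<lambda>n. {0..real n})"
    by (auto simp: incseq_def)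
  have lim_Ioc: "(\<lambda>n. \<integral>\<^sup>+x. ennreal (h x / x) * indicator {exp (- real n)..1} x \<partial>lborel)
      \<longlonglongrightarrow> (\<integral>\<^sup>+x\<in>{0<..1}. ennreal (h x / x) \<partial>lborel)"
    unfolding Ioc[symmetric] by (rule nn_integral_indicator_incseq_LIMSEQ[OF inc_Icc]) measurable
  have lim_Ici: "(\<lambda>n. \<integral>\<^sup>+x. ennreal (h x / x) * indicator {exp (- real n)..1} x \<partial>lborel)
      \<longlonglongrightarrow> (\<integral>\<^sup>+t\<in>{0..}. ennreal (h (exp (- t))) \<partial>lborel)"
    unfolding nn_integral_exp_substitution_Icc[OF assms of_nat_0_le_iff] Ici[symmetric]
    by (rule nn_integral_indicator_incseq_LIMSEQ[OF inc_Ici]) measurable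
  have "(\<integral>\<^sup>+x\<in>{0<..1}. ennreal (h x / x) \<partial>lborel) = (\<integral>\<^sup>+x\<in>{0<..<1}. ennreal (h x / x) \<partial>lborel)"
    by (intro nn_integral_cong_AE)
      (use AE_lborel_singleton[of 1] in \<open>eventually_elim, auto split: split_indicator\<close>)
  with LIMSEQ_unique[OF lim_Ioc lim_Ici] show ?thesis by simp
qed

lemma summable_powr_below_x_alpha:
  assumes "0 \<le> x" "x \<le> 1" "x < x_alpha a"
  shows "summable (\<lambda>k. x powr a (Suc k))"
proof (rule ccontr)
  assume "\<not> summable (\<lambda>k. x powr a (Suc k))"
  with assms have "x_alpha a \<le> x"
    unfolding x_alpha_def by (intro cInf_lower) (auto intro: bdd_belowI[where m = 0])
  with assms show False by simp
qed

lemma summable_L_fun_terms: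
  fixes a :: "nat \<Rightarrow> real"
  assumes lim: "filterlim a at_top sequentially" and x: "0 < x" "x < 1"
    and summable: "summable (\<lambda>k. sqrt x powr a (Suc k))"
  shows "summable (\<lambda>k. a (Suc k) ^ j * x powr a (Suc k) / (1 - x powr a (Suc k)))"
proof (rule summable_comparison_test_ev)
  \<comment> \<open>One factor \<open>sqrt x ^ a\<close> of \<open>x ^ a\<close> absorbs the polynomial factor \<open>a ^ j\<close>.\<close>
  define y where "y = sqrt x"
  have y: "0 < y" "y < 1" using x by (auto simp: y_def)
  have lim_Suc: "filterlim (\<lambda>k. a (Suc k)) at_top sequentially"
    using lim filterlim_sequentially_Suc by blast
  have "((\<lambda>c. c ^ j * y powr c) \<longlongrightarrow> 0) at_top" "((\<lambda>c. x powr c) \<longlongrightarrow> 0) at_top"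
    using x y by real_asymp+
  note lims = this[THEN filterlim_compose, OF lim_Suc]
  have "eventually (\<lambda>k. a (Suc k) ^ j * y powr a (Suc k) < 1) sequentially"
    using order_tendstoD(2)[OF lims(1)] by simp
  moreover have "eventually (\<lambda>k. x powr a (Suc k) < 1/2) sequentially"
    using order_tendstoD(2)[OF lims(2), of "1/2"] by simp
  moreover have "eventually (\<lambda>k. 0 < a (Suc k)) sequentially"
    using lim_Suc unfolding filterlim_at_top_dense by blast
  ultimately show "eventually (\<lambda>k. norm (a (Suc k) ^ j * x powr a (Suc k) / (1 - x powr a (Suc k)))
      \<le> 2 * y powr a (Suc k)) sequentially"
  proof eventually_elim
    case (elim k)
    define c where "c = a (Suc k)"
    have c: "c ^ j * y powr c < 1" "x powr c < 1/2" "0 < c" using elim by (simp_all add: c_def)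
    have "x powr c = y powr c * y powr c"
      using x by (simp add: y_def powr_mult[symmetric] real_sqrt_mult[symmetric])
    then have "norm (c ^ j * x powr c / (1 - x powr c)) = c ^ j * y powr c * y powr c / (1 - x powr c)"
      using c by (simp add: abs_of_nonneg mult.assoc)
    also have "\<dots> \<le> 1 * y powr c / (1/2)"
      using c by (intro frac_le mult_right_mono) auto
    finally show ?case by (simp add: c_def)
  qed
  show "summable (\<lambda>k. 2 * y powr a (Suc k))"
    using summable by (simp add: y_def)
qed

lemma powr_ratio_nonneg:
  fixes c x :: real
  assumes "0 \<le> c" "0 \<le> x" "x \<le> 1"
  shows "0 \<le> c ^ j * x powr c / (1 - x powr c)"
  using assms powr_le1[of c x] by (intro divide_nonneg_nonneg) auto

lemma F_N_nonneg:
  assumes "\<And>k. 1 \<le> k \<Longrightarrow> 0 \<le> a k" "0 \<le> x" "x \<le> 1"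
  shows "0 \<le> F_N a N x"
  unfolding F_N_def using assms powr_le1 by (intro prod_nonneg) auto

lemma F_N_antimono:
  assumes "\<And>k. 1 \<le> k \<Longrightarrow> 0 \<le> a k" "0 \<le> x" "x \<le> 1" and "N0 \<le> N"
  shows "F_N a N x \<le> F_N a N0 x"
  using \<open>N0 \<le> N\<close>
proof (induction N rule: dec_induct)
  case (step n)
  have "F_N a (Suc n) x = F_N a n x * (1 - x powr a (Suc n))"
    unfolding F_N_def by (simp add: prod.cl_ivl_Suc)
  also have "\<dots> \<le> F_N a n x"
    using F_N_nonneg[OF assms(1-3)] assms by (intro mult_left_le) auto
  finally show ?case using step.IH by simp
qed simp

lemma F_N_tendsto_F_fun:
  assumes "summable (\<lambda>k. x powr a (Suc k))"
  shows "(\<lambda>N. F_N a N x) \<longlonglongrightarrow> F_fun a x"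
proof -
  have "convergent_prod (\<lambda>k. 1 - x powr a (Suc k))"
    using assms by (intro abs_convergent_prod_imp_convergent_prod summable_imp_abs_convergent_prod) simp
  then have "(\<lambda>N. F_N a (Suc N) x) \<longlonglongrightarrow> F_fun a x"
    unfolding F_fun_def F_N_def prod.atLeast1_atMost_eq One_nat_def lessThan_Suc_atMost
    by (rule convergent_prod_LIMSEQ)
  then show ?thesis
    by (rule LIMSEQ_imp_Suc)
qed

definition L_N :: "(nat \<Rightarrow> real) \<Rightarrow> nat \<Rightarrow> nat \<Rightarrow> real \<Rightarrow> real" where
  "L_N a j N x = (\<Sum>k\<in>{1..N}. a k ^ j * x powr a k / (1 - x powr a k))"

lemma L_N_eq_sum_lessThan:
  "L_N a j N x = (\<Sum>k<N. a (Suc k) ^ j * x powr a (Suc k) / (1 - x powr a (Suc k)))"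
  by (simp only: L_N_def sum.atLeast1_atMost_eq One_nat_def)

lemma L_N_tendsto_L_fun:
  assumes "summable (\<lambda>k. a (Suc k) ^ j * x powr a (Suc k) / (1 - x powr a (Suc k)))"
  shows "(\<lambda>N. L_N a j N x) \<longlonglongrightarrow> L_fun a j x"
  unfolding L_N_eq_sum_lessThan L_fun_def using assms by (rule summable_LIMSEQ)

lemma L_N_nonneg:
  assumes "\<And>k. 1 \<le> k \<Longrightarrow> 0 \<le> a k" "0 \<le> x" "x \<le> 1"
  shows "0 \<le> L_N a j N x"
  unfolding L_N_def using assms by (intro sum_nonneg powr_ratio_nonneg) auto

lemma L_N_le_L_fun:
  assumes "\<And>k. 1 \<le> k \<Longrightarrow> 0 \<le> a k" "0 \<le> x" "x \<le> 1"
    and "summable (\<lambda>k. a (Suc k) ^ j * x powr a (Suc k) / (1 - x powr a (Suc k)))"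
  shows "L_N a j N x \<le> L_fun a j x"
  unfolding L_N_eq_sum_lessThan L_fun_def using assms
  by (intro sum_le_suminf powr_ratio_nonneg) auto

lemma EU_integrand_eq:
  assumes k: "k \<in> {1..N}" "0 < a k" and x: "0 < x" "x < 1" and j: "1 \<le> j"
  shows "a k * x powr a k * (a k * - ln x) ^ (j - 1) / fact (j - 1)
      * (\<Prod>i\<in>{1..N} - {k}. 1 - x powr a i) / x
    = a k ^ j * x powr a k / (1 - x powr a k) * (F_N a N x * \<bar>ln x\<bar> ^ (j - 1) / x / fact (j - 1))"
proof -
  have ratio: "A * p * B / f * P / y = C * p / q * (q * P * D / y / f)"
    if "q \<noteq> 0" "A * B = C * D" for A B C D p q f P y :: real
    using that by (simp add: field_simps)
  have lt: "x powr a k < 1" using x k powr_less_mono2[of "a k" x 1] by simp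
  have F: "F_N a N x = (1 - x powr a k) * (\<Prod>i\<in>{1..N} - {k}. 1 - x powr a i)"
    unfolding F_N_def using k by (simp add: prod.remove)
  have pow: "a k * (a k * - ln x) ^ (j - 1) = a k ^ j * \<bar>ln x\<bar> ^ (j - 1)"
  proof -
    obtain m where "j = Suc m" using j by (cases j) auto
    with x show ?thesis by (simp only: diff_Suc_1 power_Suc power_mult_distrib) simp
  qed
  show ?thesis unfolding F using lt pow by (intro ratio) simp_all
qed

lemma EU_eq_nn_integral_L_N:
  assumes pos: "\<And>k. 1 \<le> k \<Longrightarrow> 0 < a k" and j: "1 \<le> j"
  shows "EU a j N = (\<integral>\<^sup>+x\<in>{0<..<1}.
    ennreal (L_N a j N x * F_N a N x * \<bar>ln x\<bar> ^ (j - 1) / x / fact (j - 1)) \<partial>lborel)"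
proof -
  define G where "G x = F_N a N x * \<bar>ln x\<bar> ^ (j - 1) / x / fact (j - 1)" for x
  define t where "t k x = a k ^ j * x powr a k / (1 - x powr a k) * G x" for k x
  define h where "h k x = a k * x powr a k * (a k * - ln x) ^ (j - 1) / fact (j - 1)
    * (\<Prod>i\<in>{1..N} - {k}. 1 - x powr a i)" for k x
  have [measurable]: "h k \<in> borel_measurable borel" "t k \<in> borel_measurable borel" for k
    unfolding h_def t_def G_def F_N_def by measurable
  have h_eq_t: "ennreal (h k x / x) * indicator {0<..<1} x = ennreal (t k x) * indicator {0<..<1} x"
    if "k \<in> {1..N}" for k x
    using EU_integrand_eq[of k N a x j] pos that j unfolding h_def t_def G_def
    by (auto split: split_indicator)
  have sum_t: "(\<Sum>k\<in>{1..N}. ennreal (t k x)) = ennreal (L_N a j N x * G x)" if "0 < x" "x < 1" for x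
  proof -
    have "0 \<le> F_N a N x" using that pos[THEN less_imp_le] by (intro F_N_nonneg) auto
    with that have "0 \<le> G x" unfolding G_def by simp
    then have "(\<Sum>k\<in>{1..N}. ennreal (t k x)) = ennreal (\<Sum>k\<in>{1..N}. t k x)"
      using that pos[THEN less_imp_le] unfolding t_def
      by (intro sum_ennreal mult_nonneg_nonneg powr_ratio_nonneg) auto
    then show ?thesis unfolding t_def L_N_def by (simp add: sum_distrib_right)
  qed
  have "EU a j N = (\<Sum>k\<in>{1..N}. \<integral>\<^sup>+t\<in>{0..}. ennreal (h k (exp (- t))) \<partial>lborel)"
    unfolding EU_def by (intro sum.cong refl nn_integral_cong) (simp add: h_def powr_def)
  also have "\<dots> = (\<Sum>k\<in>{1..N}. \<integral>\<^sup>+x\<in>{0<..<1}. ennreal (t k x) \<partial>lborel)"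
    by (intro sum.cong refl) (simp add: nn_integral_exp_substitution h_eq_t)
  also have "\<dots> = (\<integral>\<^sup>+x. (\<Sum>k\<in>{1..N}. ennreal (t k x) * indicator {0<..<1} x) \<partial>lborel)"
    by (intro nn_integral_sum[symmetric]) measurable
  also have "\<dots> = (\<integral>\<^sup>+x\<in>{0<..<1}. ennreal (L_N a j N x * G x) \<partial>lborel)"
    using sum_t by (intro nn_integral_cong) (auto simp flip: sum_distrib_right split: split_indicator)
  finally show ?thesis by (simp add: G_def mult.assoc)
qed

lemma nn_integral_dominated_convergence_eventually:
  fixes u :: "nat \<Rightarrow> 'a \<Rightarrow> real"
  assumes [measurable]: "\<And>N. u N \<in> borel_measurable M" "w \<in> borel_measurable M" "S \<in> sets M"
    and lim: "\<And>x. x \<in> S \<Longrightarrow> (\<lambda>N. u N x) \<longlonglongrightarrow> u' x"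
    and dom: "\<And>N x. K \<le> N \<Longrightarrow> x \<in> S \<Longrightarrow> u N x \<le> w x"
    and fin: "(\<integral>\<^sup>+x\<in>S. ennreal (w x) \<partial>M) < \<infinity>"
  shows "(\<lambda>N. \<integral>\<^sup>+x\<in>S. ennreal (u N x) \<partial>M) \<longlonglongrightarrow> (\<integral>\<^sup>+x\<in>S. ennreal (u' x) \<partial>M)"
    and "(\<integral>\<^sup>+x\<in>S. ennreal (u' x) \<partial>M) < \<infinity>"
proof -
  define U where "U N x = ennreal (u (N + K) x) * indicator S x" for N x
  define U' where "U' x = ennreal (u' x) * indicator S x" for x
  have U_lim: "(\<lambda>N. U N x) \<longlonglongrightarrow> U' x" for x
    using LIMSEQ_ignore_initial_segment[OF lim, of x K]
    unfolding U_def U'_def by (cases "x \<in> S") (auto intro: tendsto_ennrealI)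
  have [measurable]: "U N \<in> borel_measurable M" for N unfolding U_def by measurable
  have [measurable]: "U' \<in> borel_measurable M"
    using U_lim by (rule borel_measurable_LIMSEQ_order) measurable
  have U_le: "U N x \<le> ennreal (w x) * indicator S x" for N x
    using dom[of "N + K" x] unfolding U_def by (auto intro: ennreal_leI split: split_indicator)
  have "(\<lambda>N. \<integral>\<^sup>+x. U N x \<partial>M) \<longlonglongrightarrow> (\<integral>\<^sup>+x. U' x \<partial>M)"
    using U_le U_lim fin by (intro nn_integral_dominated_convergence) auto
  then show "(\<lambda>N. \<integral>\<^sup>+x\<in>S. ennreal (u N x) \<partial>M) \<longlonglongrightarrow> (\<integral>\<^sup>+x\<in>S. ennreal (u' x) \<partial>M)"
    unfolding U_def U'_def by (rule LIMSEQ_offset)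
  have "U' x \<le> ennreal (w x) * indicator S x" for x
    using U_le by (intro LIMSEQ_le_const2[OF U_lim]) blast
  then have "(\<integral>\<^sup>+x. U' x \<partial>M) \<le> (\<integral>\<^sup>+x\<in>S. ennreal (w x) \<partial>M)"
    by (rule nn_integral_mono)
  with fin show "(\<integral>\<^sup>+x\<in>S. ennreal (u' x) \<partial>M) < \<infinity>"
    unfolding U'_def by simp
qed

lemma L_N_F_N_integrand_le:
  assumes nonneg: "\<And>k. 1 \<le> k \<Longrightarrow> 0 \<le> a k" and x: "0 < x" "x < 1"
    and summable: "summable (\<lambda>k. a (Suc k) ^ j * x powr a (Suc k) / (1 - x powr a (Suc k)))"
    and "N0 \<le> N"
  shows "L_N a j N x * F_N a N x * \<bar>ln x\<bar> ^ (j - 1) / x / fact (j - 1)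
    \<le> L_fun a j x * F_N a N0 x * \<bar>ln x\<bar> ^ (j - 1) / x"
proof -
  define c where "c = \<bar>ln x\<bar> ^ (j - 1) / x"
  have c: "0 \<le> c" using x by (simp add: c_def)
  have L: "0 \<le> L_N a j N x" "L_N a j N x \<le> L_fun a j x"
    using nonneg x summable by (auto intro: L_N_nonneg L_N_le_L_fun)
  have F: "0 \<le> F_N a N x" "F_N a N x \<le> F_N a N0 x"
    using nonneg x \<open>N0 \<le> N\<close> by (auto intro: F_N_nonneg F_N_antimono)
  have "L_N a j N x * F_N a N x * c / fact (j - 1) \<le> L_N a j N x * F_N a N x * c"
    using divide_left_mono[of 1 "fact (j - 1)" "L_N a j N x * F_N a N x * c"] L F c by simp
  also have "\<dots> \<le> L_fun a j x * F_N a N0 x * c"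
    using L F c by (intro mult_right_mono mult_mono order_trans[OF L]) auto
  finally show ?thesis by (simp add: c_def)
qed

theorem proposition3:
  fixes a :: "nat \<Rightarrow> real" and j :: nat
  assumes pos: "\<And>k. k \<ge> 1 \<Longrightarrow> a k > 0"
    and lim: "filterlim a at_top sequentially"
    and xa: "x_alpha a = 1"
    and j: "j \<ge> 2"
    and hyp: "\<exists>N0. (\<integral>\<^sup>+ x \<in> {0<..<1}.
        ennreal (L_fun a j x * F_N a N0 x * \<bar>ln x\<bar> ^ (j - 1) / x) \<partial>lborel) < \<infinity>"
  shows "(\<lambda>N. EU a j N) \<longlonglongrightarrow> I_fun a j \<and> I_fun a j < \<infinity>"
proof -
  obtain N0 where fin: "(\<integral>\<^sup>+ x \<in> {0<..<1}.
      ennreal (L_fun a j x * F_N a N0 x * \<bar>ln x\<bar> ^ (j - 1) / x) \<partial>lborel) < \<infinity>"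
    using hyp by blast
  have summable_pow: "summable (\<lambda>k. x powr a (Suc k))" if "0 < x" "x < 1" for x
    using that xa by (intro summable_powr_below_x_alpha) auto
  have summable_L: "summable (\<lambda>k. a (Suc k) ^ j * x powr a (Suc k) / (1 - x powr a (Suc k)))"
    if "0 < x" "x < 1" for x
    using that by (intro summable_L_fun_terms lim summable_pow) auto
  have limit: "(\<lambda>N. L_N a j N x * F_N a N x * \<bar>ln x\<bar> ^ (j - 1) / x / fact (j - 1))
      \<longlonglongrightarrow> L_fun a j x * F_fun a x * \<bar>ln x\<bar> ^ (j - 1) / x / fact (j - 1)" if "x \<in> {0<..<1}" for x
    using that
    by (intro tendsto_intros L_N_tendsto_L_fun F_N_tendsto_F_fun summable_L summable_pow) auto
  have dominated: "L_N a j N x * F_N a N x * \<bar>ln x\<bar> ^ (j - 1) / x / fact (j - 1)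
      \<le> L_fun a j x * F_N a N0 x * \<bar>ln x\<bar> ^ (j - 1) / x" if "N0 \<le> N" "x \<in> {0<..<1}" for N x
    using that pos[THEN less_imp_le] by (intro L_N_F_N_integrand_le summable_L) auto
  have meas_u: "(\<lambda>x. L_N a j N x * F_N a N x * \<bar>ln x\<bar> ^ (j - 1) / x / fact (j - 1))
      \<in> borel_measurable lborel" for N
    unfolding L_N_def F_N_def by measurable
  have meas_w: "(\<lambda>x. L_fun a j x * F_N a N0 x * \<bar>ln x\<bar> ^ (j - 1) / x) \<in> borel_measurable lborel"
    unfolding L_fun_def F_N_def by measurable
  note convergence =
    nn_integral_dominated_convergence_eventually[where K = N0, OF meas_u meas_w _ limit dominated fin]
  have "EU a j = (\<lambda>N. \<integral>\<^sup>+x\<in>{0<..<1}.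
      ennreal (L_N a j N x * F_N a N x * \<bar>ln x\<bar> ^ (j - 1) / x / fact (j - 1)) \<partial>lborel)"
    using pos j by (intro ext EU_eq_nn_integral_L_N) auto
  with convergence show ?thesis unfolding I_fun_def xa by simp
qed

end
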